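(* Let $0<L<\infty$, $\varphi\in(0,1)$, $\kappa_f,\kappa_s,h_v,c_{p,f},\dot m_c,A_c>0$, $T_b,q_{HG}\in\mathbb R$, and consider the boundary value problem for $(T_f,T_s)$ on $[0,L]$: $$-\varphi\kappa_fT_f''+c_{p,f}\frac{\dot m_c}{A_c}T_f'=h_v(T_s-T_f),\qquad (1-\varphi)\kappa_sT_s''=h_v(T_s-T_f)\quad\text{on }(0,L),$$ $$T_f(0)=T_s(0)=T_b,\quad (1-\varphi)\kappa_sT_s'(L)=q_{HG}-c_{p,f}\frac{\dot m_c}{A_c}(T_s(L)-T_f(L)),\quad T_f'(L)=\frac{h_vA_c}{c_{p,f}\dot m_c}(T_s(L)-T_f(L)).$$ Then: (1) this problem has a unique solution; (2) if $q_{HG}>0$, then $T_s-T_f$ is positive, $T_f$ is monotonically increasing with $T_f(y)\ge T_b$ for $y\in[0,L]$, and $T_s$ is monotonically increasing with $T_s(y)\ge T_b$ for $y\in[0,L]$; (3) if $q_{HG}=0$, then $T_f(y)=T_s(y)=T_b$ for all $y\in[0,L]$. *)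

theory Defs
  imports "HOL-Analysis.Analysis"
begin

definition bvp_solution ::
  "real \<Rightarrow> real \<Rightarrow> real \<Rightarrow> real \<Rightarrow> real \<Rightarrow> real \<Rightarrow> real \<Rightarrow> real \<Rightarrow> real \<Rightarrow> real \<Rightarrow>
   (real \<Rightarrow> real) \<Rightarrow> (real \<Rightarrow> real) \<Rightarrow> bool" where
  "bvp_solution L \<phi> \<kappa>f \<kappa>s hv cpf mc Ac Tb qHG Tf Ts \<longleftrightarrow>
     (\<exists>Tf' Ts' Tf'' Ts''.
        (\<forall>y\<in>{0..L}. (Tf has_real_derivative Tf' y) (at y within {0..L})) \<and>
        (\<forall>y\<in>{0..L}. (Ts has_real_derivative Ts' y) (at y within {0..L})) \<and>
        continuous_on {0..L} Tf' \<and> continuous_on {0..L} Ts' \<and>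
        (\<forall>y\<in>{0<..<L}. (Tf' has_real_derivative Tf'' y) (at y)) \<and>
        (\<forall>y\<in>{0<..<L}. (Ts' has_real_derivative Ts'' y) (at y)) \<and>
        (\<forall>y\<in>{0<..<L}.
           - \<phi> * \<kappa>f * Tf'' y + cpf * (mc / Ac) * Tf' y = hv * (Ts y - Tf y)) \<and>
        (\<forall>y\<in>{0<..<L}. (1 - \<phi>) * \<kappa>s * Ts'' y = hv * (Ts y - Tf y)) \<and>
        Tf 0 = Tb \<and> Ts 0 = Tb \<and>
        (1 - \<phi>) * \<kappa>s * Ts' L = qHG - cpf * (mc / Ac) * (Ts L - Tf L) \<and>
        Tf' L = (hv * Ac) / (cpf * mc) * (Ts L - Tf L))"

end

theory Submission
  imports Defs "HOL-Real_Asymp.Real_Asymp"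
begin

(* With D = Ts - Tf, u = Tf' and w = Ts' the problem becomes a linear first-order system for
   (D, u, w) with D(0) = 0 and two conditions at L.  Its sign structure yields comparison
   principles: if D <= 0 and u <= 0 <= w at a point, with u or w nonzero, then w - u stays
   positive to the left and D < 0 there; symmetrically, D >= 0 and u <= 0 <= w, not all zero,
   propagate D > 0 to the right.  Evaluated at L they force (D, u, w)(L) = 0 for qHG = 0, and
   an energy estimate then gives D = u = w = 0 everywhere, which by linearity is uniqueness.
   For qHG > 0 they make D, u, w positive at L and exclude every zero of u and w, and D has no
   nonpositive interior minimum because (w - u)' < 0 there.  Existence: constants and three
   exponential modes, whose exponents are the real roots of a cubic, span a four-parameter
   family of solutions of the ODEs; the linear map to the boundary data is injective by
   uniqueness, hence onto. *)

section \<open>Calculus on intervals\<close>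

lemma exp_mult_nonpos_iff: "exp t * x \<le> 0 \<longleftrightarrow> x \<le> (0::real)"
  by (simp add: mult_le_0_iff)

lemma exp_mult_neg_iff: "exp t * x < 0 \<longleftrightarrow> x < (0::real)"
  by (simp add: mult_less_0_iff)

lemma DERIV_nonneg_imp_le_on:
  fixes f f' :: "real \<Rightarrow> real"
  assumes "continuous_on S f" "{x..y} \<subseteq> S" "x \<le> y"
    and "\<And>t. x < t \<Longrightarrow> t < y \<Longrightarrow> (f has_real_derivative f' t) (at t)"
    and "\<And>t. x < t \<Longrightarrow> t < y \<Longrightarrow> 0 \<le> f' t"
  shows "f x \<le> f y"
  using assms(3) by (rule DERIV_nonneg_imp_increasing_open)
    (use assms continuous_on_subset in blast)+

lemma DERIV_pos_imp_less_on:
  fixes f f' :: "real \<Rightarrow> real"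
  assumes "continuous_on S f" "{x..y} \<subseteq> S" "x < y"
    and "\<And>t. x < t \<Longrightarrow> t < y \<Longrightarrow> (f has_real_derivative f' t) (at t)"
    and "\<And>t. x < t \<Longrightarrow> t < y \<Longrightarrow> 0 < f' t"
  shows "f x < f y"
  using assms(3) by (rule DERIV_pos_imp_increasing_open)
    (use assms continuous_on_subset in blast)+

lemma mono_on_if_deriv_nonneg:
  fixes f f' :: "real \<Rightarrow> real"
  assumes "\<And>y. y \<in> {s..t} \<Longrightarrow> (f has_real_derivative f' y) (at y within {s..t})"
    and "\<And>y. y \<in> {s..t} \<Longrightarrow> 0 \<le> f' y"
  shows "mono_on {s..t} f"
proof (rule mono_onI)
  fix x y assume xy: "x \<in> {s..t}" "y \<in> {s..t}" "x \<le> y"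
  show "f x \<le> f y"
  proof (rule DERIV_nonneg_imp_le_on[OF DERIV_continuous_on[OF assms(1)] _ \<open>x \<le> y\<close>])
    fix z assume "x < z" "z < y"
    then have "z \<in> {s<..<t}" using xy by auto
    then show "(f has_real_derivative f' z) (at z)" "0 \<le> f' z"
      using assms[of z] by (auto simp: at_within_Icc_at)
  qed (use xy in auto)
qed

lemma pos_if_no_zero:
  fixes f :: "real \<Rightarrow> real"
  assumes "continuous_on {x..y} f" "x \<le> y" "0 < f y" "\<And>t. t \<in> {x..<y} \<Longrightarrow> f t \<noteq> 0"
  shows "0 < f x"
proof (rule ccontr)
  assume "\<not> 0 < f x"
  then obtain t where "x \<le> t" "t \<le> y" "f t = 0" using IVT'[of f x 0 y] assms by auto
  then show False using assms by (cases "t = y") auto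
qed

lemma nonpos_interior_min:
  fixes f :: "real \<Rightarrow> real"
  assumes "continuous_on {s..t} f" "f s = 0" "0 < f t" "y \<in> {s<..t}" "f y \<le> 0"
  obtains m where "m \<in> {s<..<t}" "f m \<le> 0" "\<And>z. z \<in> {s..t} \<Longrightarrow> f m \<le> f z"
proof -
  obtain m where "m \<in> {s..t}" and m_min: "\<And>z. z \<in> {s..t} \<Longrightarrow> f m \<le> f z"
    using continuous_attains_inf[OF compact_Icc _ assms(1)] assms(4) by auto
  show ?thesis
  proof (cases "m = s")
    case True
    then have "f y = 0" using m_min[of y] assms(2,4,5) by auto
    moreover have "y \<noteq> t" using calculation assms(3) by auto
    ultimately show ?thesis using that[of y] m_min True assms(2,4) by auto
  next
    case False
    have "f m \<le> 0" using m_min[of y] assms(4,5) by auto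
    moreover have "m \<noteq> t" using calculation assms(3) by auto
    ultimately show ?thesis using that[of m] m_min False \<open>m \<in> {s..t}\<close> by auto
  qed
qed

lemma smaller_left_of_critical_point:
  fixes f g :: "real \<Rightarrow> real"
  assumes "s < t" "continuous_on {s..t} f"
    and "\<And>x. x \<in> {s<..<t} \<Longrightarrow> (f has_real_derivative g x) (at x)"
    and "g t = 0" "(g has_real_derivative g') (at t)" "g' < 0"
  obtains x where "x \<in> {s..<t}" "f x < f t"
proof -
  obtain e where "0 < e" and g_pos: "\<And>d. 0 < d \<Longrightarrow> d < e \<Longrightarrow> 0 < g (t - d)"
    using DERIV_neg_dec_left[OF assms(5,6)] assms(4) by auto
  have "max s (t - e) < t" using \<open>0 < e\<close> \<open>s < t\<close> by simp
  then obtain x where "max s (t - e) < x" "x < t" using dense by blast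
  then have x: "s < x" "x < t" "t - x < e" by auto
  have "f x < f t"
  proof (rule DERIV_pos_imp_less_on[OF assms(2) _ \<open>x < t\<close>, where f' = g])
    fix \<tau> assume "x < \<tau>" "\<tau> < t"
    then show "(f has_real_derivative g \<tau>) (at \<tau>)" "0 < g \<tau>"
      using assms(3) g_pos[of "t - \<tau>"] x by auto
  qed (use x in auto)
  then show ?thesis using that[of x] x by simp
qed

lemma pos_on_interval_backward_induct:
  fixes f :: "real \<Rightarrow> real"
  assumes "continuous_on {\<alpha>..\<beta>} f"
    and step: "\<And>t. t \<in> {\<alpha>..\<beta>} \<Longrightarrow> (\<And>s. s \<in> {t<..\<beta>} \<Longrightarrow> 0 < f s) \<Longrightarrow> 0 < f t"
    and "t \<in> {\<alpha>..\<beta>}"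
  shows "0 < f t"
proof (rule ccontr)
  define T where "T = {t \<in> {\<alpha>..\<beta>}. f t \<le> 0}"
  assume "\<not> 0 < f t"
  then have "T \<noteq> {}" using assms(3) unfolding T_def by auto
  moreover have bdd: "bdd_above T" unfolding T_def by (rule bdd_aboveI[of _ \<beta>]) auto
  moreover have "closed T"
    unfolding T_def using assms(1) continuous_on_const by (rule continuous_on_closed_Collect_le) simp
  ultimately have "Sup T \<in> T" by (rule closed_contains_Sup)
  moreover have "0 < f s" if "s \<in> {Sup T<..\<beta>}" for s
    using that cSup_upper[OF _ bdd, of s] \<open>Sup T \<in> T\<close> unfolding T_def by force
  ultimately show False using step[of "Sup T"] unfolding T_def by force
qed

lemma pos_on_interval_forward_induct:
  fixes f :: "real \<Rightarrow> real"
  assumes "continuous_on {\<alpha>..\<beta>} f"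
    and step: "\<And>t. t \<in> {\<alpha>..\<beta>} \<Longrightarrow> (\<And>s. s \<in> {\<alpha>..<t} \<Longrightarrow> 0 < f s) \<Longrightarrow> 0 < f t"
    and "t \<in> {\<alpha>..\<beta>}"
  shows "0 < f t"
proof (rule ccontr)
  define T where "T = {t \<in> {\<alpha>..\<beta>}. f t \<le> 0}"
  assume "\<not> 0 < f t"
  then have "T \<noteq> {}" using assms(3) unfolding T_def by auto
  moreover have bdd: "bdd_below T" unfolding T_def by (rule bdd_belowI[of _ \<alpha>]) auto
  moreover have "closed T"
    unfolding T_def using assms(1) continuous_on_const by (rule continuous_on_closed_Collect_le) simp
  ultimately have "Inf T \<in> T" by (rule closed_contains_Inf)
  moreover have "0 < f s" if "s \<in> {\<alpha>..<Inf T}" for s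
    using that cInf_lower[OF _ bdd, of s] \<open>Inf T \<in> T\<close> unfolding T_def by force
  ultimately show False using step[of "Inf T"] unfolding T_def by force
qed

lemma zero_propagates_if_deriv_bounded:
  fixes V V' :: "real \<Rightarrow> real"
  assumes "continuous_on {s..t} V" "s \<le> t"
    and "\<And>x. x \<in> {s<..<t} \<Longrightarrow> (V has_real_derivative V' x) (at x)"
    and "\<And>x. x \<in> {s<..<t} \<Longrightarrow> \<bar>V' x\<bar> \<le> k * V x"
    and "\<And>x. x \<in> {s..t} \<Longrightarrow> 0 \<le> V x"
  shows "V s = 0 \<Longrightarrow> V t = 0" and "V t = 0 \<Longrightarrow> V s = 0"
proof -
  assume "V s = 0"
  have "(\<lambda>x. - (exp (- k * x) * V x)) s \<le> (\<lambda>x. - (exp (- k * x) * V x)) t"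
  proof (rule DERIV_nonneg_imp_le_on[OF _ order_refl \<open>s \<le> t\<close>])
    show "continuous_on {s..t} (\<lambda>x. - (exp (- k * x) * V x))"
      using assms(1) by (intro continuous_intros)
    fix x assume x: "s < x" "x < t"
    show "((\<lambda>x. - (exp (- k * x) * V x)) has_real_derivative exp (- k * x) * (k * V x - V' x)) (at x)"
      using x by (auto intro!: derivative_eq_intros assms(3) simp: algebra_simps)
    show "0 \<le> exp (- k * x) * (k * V x - V' x)"
      using assms(4)[of x] x by simp
  qed
  then show "V t = 0"
    using \<open>V s = 0\<close> assms(2) assms(5)[of t] by (simp add: mult_le_0_iff)
next
  assume "V t = 0"
  have "(\<lambda>x. exp (k * x) * V x) s \<le> (\<lambda>x. exp (k * x) * V x) t"
  proof (rule DERIV_nonneg_imp_le_on[OF _ order_refl \<open>s \<le> t\<close>])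
    show "continuous_on {s..t} (\<lambda>x. exp (k * x) * V x)"
      using assms(1) by (intro continuous_intros)
    fix x assume x: "s < x" "x < t"
    show "((\<lambda>x. exp (k * x) * V x) has_real_derivative exp (k * x) * (V' x + k * V x)) (at x)"
      using x by (auto intro!: derivative_eq_intros assms(3) simp: algebra_simps)
    show "0 \<le> exp (k * x) * (V' x + k * V x)"
      using assms(4)[of x] x by simp
  qed
  then show "V s = 0"
    using \<open>V t = 0\<close> assms(2) assms(5)[of s] by (simp add: mult_le_0_iff)
qed

lemma energy_derivative_bound:
  fixes p q r D u w :: real
  assumes "0 \<le> p" "0 \<le> q" "0 \<le> r"
  shows "abs (2*D*(w - u) + 2*p*u\<^sup>2 - 2*q*u*D + 2*r*w*D) \<le> (2 + 2*p + q + r) * (D\<^sup>2 + u\<^sup>2 + w\<^sup>2)"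
proof -
  have "0 \<le> p * (D\<^sup>2 + w\<^sup>2)" "0 \<le> p * (D\<^sup>2 + 2*u\<^sup>2 + w\<^sup>2)"
    "0 \<le> q * (D + u)\<^sup>2" "0 \<le> q * (D - u)\<^sup>2" "0 \<le> r * (w - D)\<^sup>2" "0 \<le> r * (w + D)\<^sup>2"
    "0 \<le> q * w\<^sup>2" "0 \<le> r * u\<^sup>2"
    using assms by simp_all
  moreover have "0 \<le> (D - w)\<^sup>2 + (D + u)\<^sup>2 + u\<^sup>2 + w\<^sup>2" "0 \<le> (D + w)\<^sup>2 + (D - u)\<^sup>2 + u\<^sup>2 + w\<^sup>2"
    by simp_all
  ultimately show ?thesis
    unfolding abs_le_iff by (simp add: power2_eq_square algebra_simps)
qed

section \<open>The reduced first-order system\<close>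

locale exchanger_coeffs =
  fixes a b c h L :: real
  assumes a_pos: "0 < a" and b_pos: "0 < b" and c_pos: "0 < c" and h_pos: "0 < h"
    and L_pos: "0 < L"

(* (D, u, w) stands for (Ts - Tf, Tf', Ts') and (a, b, c, h) for
   (\<phi> \<kappa>f, cpf mc / Ac, (1 - \<phi>) \<kappa>s, hv); see the sublocale heat_exchanger. *)
locale reduced_solution = exchanger_coeffs +
  fixes D u w :: "real \<Rightarrow> real"
  assumes cont_D: "continuous_on {0..L} D"
    and cont_u: "continuous_on {0..L} u"
    and cont_w: "continuous_on {0..L} w"
    and D_deriv: "\<And>y. y \<in> {0<..<L} \<Longrightarrow> (D has_real_derivative w y - u y) (at y)"
    and u_deriv: "\<And>y. y \<in> {0<..<L} \<Longrightarrow> (u has_real_derivative (b * u y - h * D y) / a) (at y)"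
    and w_deriv: "\<And>y. y \<in> {0<..<L} \<Longrightarrow> (w has_real_derivative h * D y / c) (at y)"
begin

lemma uminus: "reduced_solution a b c h L (\<lambda>y. - D y) (\<lambda>y. - u y) (\<lambda>y. - w y)"
proof unfold_locales
  fix y assume y: "y \<in> {0<..<L}"
  show "((\<lambda>y. - D y) has_real_derivative - w y - - u y) (at y)"
    using D_deriv[OF y] by (auto intro!: derivative_eq_intros)
  show "((\<lambda>y. - u y) has_real_derivative (b * - u y - h * - D y) / a) (at y)"
    using DERIV_minus[OF u_deriv[OF y]] by (simp add: minus_divide_left)
  show "((\<lambda>y. - w y) has_real_derivative h * - D y / c) (at y)"
    using w_deriv[OF y] by (auto intro!: derivative_eq_intros)
qed (intro continuous_intros cont_D cont_u cont_w)+

lemma diff: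
  assumes "reduced_solution a b c h L D2 u2 w2"
  shows "reduced_solution a b c h L (\<lambda>y. D y - D2 y) (\<lambda>y. u y - u2 y) (\<lambda>y. w y - w2 y)"
proof -
  interpret S2: reduced_solution a b c h L D2 u2 w2 by (fact assms)
  show ?thesis
  proof unfold_locales
    fix y assume y: "y \<in> {0<..<L}"
    show "((\<lambda>y. D y - D2 y) has_real_derivative w y - w2 y - (u y - u2 y)) (at y)"
      using D_deriv[OF y] S2.D_deriv[OF y] by (auto intro!: derivative_eq_intros)
    show "((\<lambda>y. u y - u2 y) has_real_derivative (b * (u y - u2 y) - h * (D y - D2 y)) / a) (at y)"
      by (rule DERIV_cong[OF DERIV_diff[OF u_deriv[OF y] S2.u_deriv[OF y]]])
        (use a_pos in \<open>simp add: field_simps\<close>)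
    show "((\<lambda>y. w y - w2 y) has_real_derivative h * (D y - D2 y) / c) (at y)"
      by (rule DERIV_cong[OF DERIV_diff[OF w_deriv[OF y] S2.w_deriv[OF y]]])
        (use c_pos in \<open>simp add: field_simps\<close>)
  qed (intro continuous_intros cont_D cont_u cont_w S2.cont_D S2.cont_u S2.cont_w)+
qed

lemma D_le:
  assumes "0 \<le> x" "x \<le> y" "y \<le> L" "\<And>t. x < t \<Longrightarrow> t < y \<Longrightarrow> u t \<le> w t"
  shows "D x \<le> D y"
  by (rule DERIV_nonneg_imp_le_on[OF cont_D _ \<open>x \<le> y\<close>, where f' = "\<lambda>t. w t - u t"])
    (use assms D_deriv in auto)

lemma D_less:
  assumes "0 \<le> x" "x < y" "y \<le> L" "\<And>t. x < t \<Longrightarrow> t < y \<Longrightarrow> u t < w t"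
  shows "D x < D y"
  by (rule DERIV_pos_imp_less_on[OF cont_D _ \<open>x < y\<close>, where f' = "\<lambda>t. w t - u t"])
    (use assms D_deriv in auto)

lemma w_le:
  assumes "0 \<le> x" "x \<le> y" "y \<le> L" "\<And>t. x < t \<Longrightarrow> t < y \<Longrightarrow> 0 \<le> D t"
  shows "w x \<le> w y"
  by (rule DERIV_nonneg_imp_le_on[OF cont_w _ \<open>x \<le> y\<close>, where f' = "\<lambda>t. h * D t / c"])
    (use assms w_deriv h_pos c_pos in auto)

lemma w_less:
  assumes "0 \<le> x" "x < y" "y \<le> L" "\<And>t. x < t \<Longrightarrow> t < y \<Longrightarrow> 0 < D t"
  shows "w x < w y"
  by (rule DERIV_pos_imp_less_on[OF cont_w _ \<open>x < y\<close>, where f' = "\<lambda>t. h * D t / c"])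
    (use assms w_deriv h_pos c_pos in auto)

lemma weighted_u_antimono:
  assumes "0 \<le> x" "x \<le> y" "y \<le> L" "\<And>t. x < t \<Longrightarrow> t < y \<Longrightarrow> 0 \<le> D t"
  shows "exp (- (b / a) * y) * u y \<le> exp (- (b / a) * x) * u x"
proof -
  have "(\<lambda>t. - (exp (- (b / a) * t) * u t)) x \<le> (\<lambda>t. - (exp (- (b / a) * t) * u t)) y"
  proof (rule DERIV_nonneg_imp_le_on[OF _ _ \<open>x \<le> y\<close>])
    show "continuous_on {0..L} (\<lambda>t. - (exp (- (b / a) * t) * u t))"
      using cont_u by (intro continuous_intros)
    fix t assume t: "x < t" "t < y"
    then have "t \<in> {0<..<L}" using assms by auto
    then show "((\<lambda>t. - (exp (- (b / a) * t) * u t)) has_real_derivative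
        exp (- (b / a) * t) * (h * D t / a)) (at t)"
      using a_pos by (auto intro!: derivative_eq_intros u_deriv simp: field_simps)
    show "0 \<le> exp (- (b / a) * t) * (h * D t / a)"
      using assms(4)[OF t] a_pos h_pos by simp
  qed (use assms in auto)
  then show ?thesis by simp
qed

lemma u_nonpos_forward:
  assumes "0 \<le> x" "x \<le> y" "y \<le> L" "\<And>t. x < t \<Longrightarrow> t < y \<Longrightarrow> 0 \<le> D t"
  shows "u x \<le> 0 \<Longrightarrow> u y \<le> 0" and "u x < 0 \<Longrightarrow> u y < 0"
  using order_trans[OF weighted_u_antimono[OF assms], of 0]
    order.strict_trans1[OF weighted_u_antimono[OF assms], of 0]
  by (simp_all add: exp_mult_nonpos_iff exp_mult_neg_iff)

lemma u_nonpos_backward: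
  assumes "0 \<le> x" "x \<le> y" "y \<le> L" "\<And>t. x < t \<Longrightarrow> t < y \<Longrightarrow> D t \<le> 0"
  shows "u y \<le> 0 \<Longrightarrow> u x \<le> 0" and "u y < 0 \<Longrightarrow> u x < 0"
proof -
  have "exp (- (b / a) * x) * u x \<le> exp (- (b / a) * y) * u y"
    using reduced_solution.weighted_u_antimono[OF uminus assms(1-3)] assms(4) by force
  from order_trans[OF this, of 0] order.strict_trans1[OF this, of 0]
  show "u y \<le> 0 \<Longrightarrow> u x \<le> 0" and "u y < 0 \<Longrightarrow> u x < 0"
    by (simp_all add: exp_mult_nonpos_iff exp_mult_neg_iff)
qed

(* Backwards from beta the invariant w > u is self-sustaining: it makes D increase towards
   D beta <= 0, and D <= 0 in turn keeps w from decreasing and u from becoming positive. *)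
lemma D_neg_before:
  assumes "0 \<le> \<alpha>" "\<alpha> < \<beta>" "\<beta> \<le> L" "D \<beta> \<le> 0" "u \<beta> \<le> 0" "0 \<le> w \<beta>" "u \<beta> < 0 \<or> 0 < w \<beta>"
  shows "D \<alpha> < 0"
proof -
  have gap: "0 < w t - u t" if "t \<in> {\<alpha>..\<beta>}" for t
  proof (rule pos_on_interval_backward_induct[OF _ _ that])
    show "continuous_on {\<alpha>..\<beta>} (\<lambda>t. w t - u t)"
      using cont_u cont_w assms by (intro continuous_intros) (auto elim: continuous_on_subset)
    fix t assume t: "t \<in> {\<alpha>..\<beta>}" and IH: "\<And>s. s \<in> {t<..\<beta>} \<Longrightarrow> 0 < w s - u s"
    have D_nonpos: "D s \<le> 0" if "t < s" "s < \<beta>" for s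
    proof -
      have "D s \<le> D \<beta>"
      proof (rule D_le)
        fix \<tau> assume "s < \<tau>" "\<tau> < \<beta>"
        then show "u \<tau> \<le> w \<tau>" using IH[of \<tau>] that by auto
      qed (use that t assms in auto)
      then show ?thesis using assms by simp
    qed
    have "- w t \<le> - w \<beta>"
      using reduced_solution.w_le[OF uminus, of t \<beta>] D_nonpos t assms by force
    moreover have "u t \<le> 0" and "u \<beta> < 0 \<Longrightarrow> u t < 0"
      using u_nonpos_backward[of t \<beta>] D_nonpos t assms by auto
    ultimately show "0 < w t - u t" using assms by linarith
  qed
  have "D \<alpha> < D \<beta>" by (rule D_less) (use assms gap in auto)
  then show ?thesis using assms by simp
qed

lemma D_pos_after_gap:
  assumes "0 \<le> \<alpha>" "\<alpha> < \<beta>" "\<beta> \<le> L" "0 \<le> D \<alpha>" "u \<alpha> \<le> 0" "0 \<le> w \<alpha>" "u \<alpha> < 0 \<or> 0 < w \<alpha>"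
  shows "0 < D \<beta>" "u \<beta> \<le> 0"
proof -
  have gap: "0 < w t - u t" if "t \<in> {\<alpha>..\<beta>}" for t
  proof (rule pos_on_interval_forward_induct[OF _ _ that])
    show "continuous_on {\<alpha>..\<beta>} (\<lambda>t. w t - u t)"
      using cont_u cont_w assms by (intro continuous_intros) (auto elim: continuous_on_subset)
    fix t assume t: "t \<in> {\<alpha>..\<beta>}" and IH: "\<And>s. s \<in> {\<alpha>..<t} \<Longrightarrow> 0 < w s - u s"
    have D_nonneg: "0 \<le> D s" if "\<alpha> < s" "s < t" for s
    proof -
      have "D \<alpha> \<le> D s"
      proof (rule D_le)
        fix \<tau> assume "\<alpha> < \<tau>" "\<tau> < s"
        then show "u \<tau> \<le> w \<tau>" using IH[of \<tau>] that by auto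
      qed (use that t assms in auto)
      then show ?thesis using assms by simp
    qed
    have "w \<alpha> \<le> w t"
      using w_le[of \<alpha> t] D_nonneg t assms by force
    moreover have "u t \<le> 0" and "u \<alpha> < 0 \<Longrightarrow> u t < 0"
      using u_nonpos_forward[of \<alpha> t] D_nonneg t assms by auto
    ultimately show "0 < w t - u t" using assms by linarith
  qed
  have "D \<alpha> < D \<beta>" by (rule D_less) (use assms gap in auto)
  then show "0 < D \<beta>" using assms by simp
  have "0 \<le> D s" if "\<alpha> < s" "s < \<beta>" for s
  proof -
    have "D \<alpha> \<le> D s"
    proof (rule D_le)
      fix \<tau> assume "\<alpha> < \<tau>" "\<tau> < s"
      then show "u \<tau> \<le> w \<tau>" using gap[of \<tau>] that by auto
    qed (use that assms in auto)
    then show ?thesis using assms by simp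
  qed
  then show "u \<beta> \<le> 0" using u_nonpos_forward(1)[of \<alpha> \<beta>] assms by auto
qed

lemma D_pos_after:
  assumes "0 \<le> \<alpha>" "\<alpha> < \<beta>" "\<beta> \<le> L" "0 \<le> D \<alpha>" "u \<alpha> \<le> 0" "0 \<le> w \<alpha>"
    and "0 < D \<alpha> \<or> u \<alpha> < 0 \<or> 0 < w \<alpha>"
  shows "0 < D \<beta>" "u \<beta> \<le> 0"
proof (atomize (full), cases "u \<alpha> < 0 \<or> 0 < w \<alpha>")
  case True
  then show "0 < D \<beta> \<and> u \<beta> \<le> 0" using D_pos_after_gap assms by blast
next
  case False
  then have "0 < D \<alpha>" using assms by auto
  moreover have "(D \<longlongrightarrow> D \<alpha>) (at_right \<alpha>)"
    using continuous_on_subset[OF cont_D, of "{\<alpha>..\<beta>}"] assms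
    by (intro continuous_on_Icc_at_rightD) auto
  ultimately have "\<forall>\<^sub>F t in at_right \<alpha>. 0 < D t" by (simp add: order_tendstoD(1))
  then obtain \<delta> where "\<alpha> < \<delta>" and D_pos: "\<And>t. \<alpha> < t \<Longrightarrow> t < \<delta> \<Longrightarrow> 0 < D t"
    unfolding eventually_at_right_field by blast
  \<comment> \<open>Here u and w vanish at \<alpha>; just to the right D > 0 has already made w positive.\<close>
  define \<alpha>' where "\<alpha>' = (\<alpha> + min \<delta> \<beta>) / 2"
  have \<alpha>': "\<alpha> < \<alpha>'" "\<alpha>' < \<beta>" "\<alpha>' < \<delta>" using \<open>\<alpha> < \<delta>\<close> assms unfolding \<alpha>'_def by auto
  have D_pos': "0 < D t" if "\<alpha> < t" "t < \<alpha>'" for t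
    using D_pos[of t] that \<alpha>' by simp
  have "w \<alpha> < w \<alpha>'" by (rule w_less) (use \<alpha>' D_pos' assms in auto)
  moreover have "u \<alpha>' \<le> 0"
    by (rule u_nonpos_forward(1)[of \<alpha>]) (use \<alpha>' D_pos' assms in \<open>auto intro: less_imp_le\<close>)
  moreover have "0 < D \<alpha>'" using D_pos \<alpha>' by simp
  ultimately show "0 < D \<beta> \<and> u \<beta> \<le> 0"
    using D_pos_after_gap[of \<alpha>' \<beta>] \<alpha>' assms by auto
qed

lemma zero_everywhere_if_zero_at:
  assumes "t \<in> {0..L}" "D t = 0" "u t = 0" "w t = 0" "y \<in> {0..L}"
  shows "D y = 0 \<and> u y = 0 \<and> w y = 0"
proof -
  define V where "V y = (D y)\<^sup>2 + (u y)\<^sup>2 + (w y)\<^sup>2" for y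
  define V' where "V' y = 2 * D y * (w y - u y) + 2 * (b / a) * (u y)\<^sup>2 - 2 * (h / a) * u y * D y
    + 2 * (h / c) * w y * D y" for y
  define k where "k = 2 + 2 * (b / a) + h / a + h / c"
  have cont_V: "continuous_on {0..L} V"
    unfolding V_def by (intro continuous_intros cont_D cont_u cont_w)
  have deriv_V: "(V has_real_derivative V' x) (at x)" if "x \<in> {0<..<L}" for x
    unfolding V_def V'_def using a_pos c_pos
    by (auto intro!: derivative_eq_intros D_deriv u_deriv w_deriv that simp: field_simps power2_eq_square)
  have bound: "\<bar>V' x\<bar> \<le> k * V x" for x
    unfolding V_def V'_def k_def using a_pos b_pos c_pos h_pos by (intro energy_derivative_bound) auto
  have V_zero_iff: "V s = 0 \<longleftrightarrow> V s' = 0" if "s \<in> {0..L}" "s' \<in> {0..L}" "s \<le> s'" for s s'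
  proof -
    have "continuous_on {s..s'} V" using continuous_on_subset[OF cont_V] that by auto
    moreover have "(V has_real_derivative V' x) (at x)" if "x \<in> {s<..<s'}" for x
      using deriv_V \<open>s \<in> {0..L}\<close> \<open>s' \<in> {0..L}\<close> that by auto
    moreover have "0 \<le> V x" for x unfolding V_def by simp
    ultimately show ?thesis
      using zero_propagates_if_deriv_bounded[of s s' V V' k] bound \<open>s \<le> s'\<close> by blast
  qed
  have "V t = 0" unfolding V_def using assms by simp
  then have "V y = 0"
    using V_zero_iff[of t y] V_zero_iff[of y t] assms(1,5) by (cases "t \<le> y") auto
  then show ?thesis unfolding V_def by (simp add: add_nonneg_eq_0_iff)
qed

lemma boundary_nonpos_imp_zero:
  assumes "D 0 = 0" "b * u L = h * D L" "0 \<le> c * w L + b * D L" "D L \<le> 0"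
  shows "D L = 0" "u L = 0" "w L = 0"
proof -
  have "b * u L \<le> 0" using assms(2,4) h_pos by (simp add: mult_nonneg_nonpos)
  then have u_nonpos: "u L \<le> 0" using b_pos by (simp add: mult_le_0_iff)
  have "b * D L \<le> 0" using assms(4) b_pos by (simp add: mult_nonneg_nonpos)
  then have "0 \<le> c * w L" using assms(3) by linarith
  then have "0 \<le> w L" using c_pos by (simp add: zero_le_mult_iff)
  moreover have "\<not> (u L < 0 \<or> 0 < w L)"
  proof
    assume "u L < 0 \<or> 0 < w L"
    then have "D 0 < 0" using D_neg_before[of 0 L] u_nonpos \<open>0 \<le> w L\<close> assms(4) L_pos by simp
    then show False using assms(1) by simp
  qed
  ultimately show "u L = 0" "w L = 0" using u_nonpos by auto
  then show "D L = 0" using assms(2) h_pos by simp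
qed

lemma homogeneous_bvp_zero:
  assumes "D 0 = 0" "b * u L = h * D L" "c * w L + b * D L = 0" "y \<in> {0..L}"
  shows "D y = 0 \<and> u y = 0 \<and> w y = 0"
proof -
  have "D L = 0 \<and> u L = 0 \<and> w L = 0"
  proof (cases "D L \<le> 0")
    case True
    then show ?thesis using boundary_nonpos_imp_zero assms by auto
  next
    case False
    then show ?thesis using reduced_solution.boundary_nonpos_imp_zero[OF uminus] assms by auto
  qed
  then show ?thesis using zero_everywhere_if_zero_at[of L] assms L_pos by auto
qed

lemma heated_boundary_pos:
  assumes "D 0 = 0" "b * u L = h * D L" "0 < c * w L + b * D L"
  shows "0 < D L" "0 < u L" "0 < w L"
proof -
  show "0 < D L"
    using boundary_nonpos_imp_zero assms by (cases "D L \<le> 0") auto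
  then have "0 < b * u L" using assms(2) h_pos by simp
  then show "0 < u L" using b_pos by (simp add: zero_less_mult_iff)
  show "0 < w L"
  proof (rule ccontr)
    assume "\<not> 0 < w L"
    then have "- D 0 < 0"
      using reduced_solution.D_neg_before[OF uminus, of 0 L] \<open>0 < D L\<close> \<open>0 < u L\<close> L_pos by simp
    then show False using assms(1) by simp
  qed
qed

(* Each sign pattern with u t * w t <= 0 contradicts a comparison lemma, applied forwards to L
   (where D and u are positive) or backwards to 0 (where D vanishes), or
   zero_everywhere_if_zero_at. *)
lemma u_w_same_sign:
  assumes "D 0 = 0" "0 < D L" "0 < u L" "0 \<le> t" "t < L"
  shows "0 < u t * w t"
  using D_pos_after(2)[of t L] reduced_solution.D_pos_after(1)[OF uminus, of t L]
    D_neg_before[of 0 t] reduced_solution.D_neg_before[OF uminus, of 0 t]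
    zero_everywhere_if_zero_at[of t L] assms L_pos
  by (cases "t = 0") (simp_all only: zero_less_mult_iff atLeastAtMost_iff; argo)+

(* At an interior minimum of D, D' = w - u vanishes while (w - u)' = h D / c - (b u - h D) / a
   is negative, so D is smaller just to the left. *)
lemma D_pos_interior:
  assumes "D 0 = 0" "0 < D L" "\<And>y. y \<in> {0..L} \<Longrightarrow> 0 < u y" "y \<in> {0<..L}"
  shows "0 < D y"
proof (rule ccontr)
  assume "\<not> 0 < D y"
  then obtain t1 where t1: "t1 \<in> {0<..<L}" "D t1 \<le> 0"
    and t1_min: "\<And>z. z \<in> {0..L} \<Longrightarrow> D t1 \<le> D z"
    using nonpos_interior_min[OF cont_D assms(1,2,4)] by auto
  have "w t1 - u t1 = 0"
  proof (rule DERIV_local_min[OF D_deriv[OF t1(1)]])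
    show "0 < min t1 (L - t1)" using t1 by auto
    show "\<forall>z. \<bar>t1 - z\<bar> < min t1 (L - t1) \<longrightarrow> D t1 \<le> D z"
      using t1_min by (auto simp: abs_less_iff)
  qed
  moreover have "((\<lambda>z. w z - u z) has_real_derivative h * D t1 / c - (b * u t1 - h * D t1) / a) (at t1)"
    using DERIV_diff[OF w_deriv u_deriv] t1 by blast
  moreover have "h * D t1 / c - (b * u t1 - h * D t1) / a < 0"
  proof -
    have "h * D t1 / c \<le> 0" using t1 h_pos c_pos by (simp add: divide_nonpos_pos mult_nonneg_nonpos)
    moreover have "0 < b * u t1" "h * D t1 \<le> 0"
      using assms(3)[of t1] t1 b_pos h_pos by (simp_all add: mult_nonneg_nonpos)
    then have "0 < (b * u t1 - h * D t1) / a" using a_pos by simp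
    ultimately show ?thesis by linarith
  qed
  moreover have "continuous_on {0..t1} D" using continuous_on_subset[OF cont_D] t1 by auto
  moreover have "(D has_real_derivative w x - u x) (at x)" if "x \<in> {0<..<t1}" for x
    using D_deriv that t1 by auto
  ultimately obtain x where "x \<in> {0..<t1}" "D x < D t1"
    using smaller_left_of_critical_point[of 0 t1 D "\<lambda>z. w z - u z"] t1 by force
  then show False using t1_min[of x] t1 by auto
qed

lemma heated_bvp_pos:
  assumes "D 0 = 0" "b * u L = h * D L" "0 < c * w L + b * D L"
  shows "\<And>y. y \<in> {0..L} \<Longrightarrow> 0 < u y" "\<And>y. y \<in> {0..L} \<Longrightarrow> 0 < w y"
    "\<And>y. y \<in> {0<..L} \<Longrightarrow> 0 < D y"
proof -
  note boundary = heated_boundary_pos[OF assms]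
  have no_zero: "u t \<noteq> 0" "w t \<noteq> 0" if "t \<in> {0..<L}" for t
    using u_w_same_sign[OF assms(1) boundary(1,2), of t] that by auto
  show u_pos: "0 < u y" if "y \<in> {0..L}" for y
    by (rule pos_if_no_zero[of y L]) (use that boundary no_zero continuous_on_subset[OF cont_u] in auto)
  show "0 < w y" if "y \<in> {0..L}" for y
    by (rule pos_if_no_zero[of y L]) (use that boundary no_zero continuous_on_subset[OF cont_w] in auto)
  show "0 < D y" if "y \<in> {0<..L}" for y
    using D_pos_interior[OF assms(1) boundary(1) u_pos that] .
qed

end

lemma (in exchanger_coeffs) reduced_solution_of_odes:
  assumes "continuous_on {0..L} Tf" "continuous_on {0..L} Ts"
    and "continuous_on {0..L} Tf'" "continuous_on {0..L} Ts'"
    and "\<And>y. y \<in> {0<..<L} \<Longrightarrow> (Tf has_real_derivative Tf' y) (at y)"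
    and "\<And>y. y \<in> {0<..<L} \<Longrightarrow> (Ts has_real_derivative Ts' y) (at y)"
    and "\<And>y. y \<in> {0<..<L} \<Longrightarrow> (Tf' has_real_derivative Tf'' y) (at y)"
    and "\<And>y. y \<in> {0<..<L} \<Longrightarrow> (Ts' has_real_derivative Ts'' y) (at y)"
    and "\<And>y. y \<in> {0<..<L} \<Longrightarrow> - a * Tf'' y + b * Tf' y = h * (Ts y - Tf y)"
    and "\<And>y. y \<in> {0<..<L} \<Longrightarrow> c * Ts'' y = h * (Ts y - Tf y)"
  shows "reduced_solution a b c h L (\<lambda>y. Ts y - Tf y) Tf' Ts'"
proof unfold_locales
  fix y assume y: "y \<in> {0<..<L}"
  show "((\<lambda>y. Ts y - Tf y) has_real_derivative Ts' y - Tf' y) (at y)"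
    by (rule DERIV_diff[OF assms(6)[OF y] assms(5)[OF y]])
  have "Tf'' y = (b * Tf' y - h * (Ts y - Tf y)) / a"
    using assms(9)[OF y] a_pos by (simp add: field_simps)
  with assms(7)[OF y] show "(Tf' has_real_derivative (b * Tf' y - h * (Ts y - Tf y)) / a) (at y)"
    by simp
  have "Ts'' y = h * (Ts y - Tf y) / c"
    using assms(10)[OF y] c_pos by (simp add: field_simps)
  with assms(8)[OF y] show "(Ts' has_real_derivative h * (Ts y - Tf y) / c) (at y)"
    by simp
qed (intro continuous_intros assms(1-4))+

section \<open>Exponential solutions\<close>

lemma vandermonde3_eq_zero:
  fixes x1 x2 x3 k1 k2 k3 :: "'a :: idom"
  assumes "x1 \<noteq> 0" "x2 \<noteq> 0" "x3 \<noteq> 0" "x1 \<noteq> x2" "x1 \<noteq> x3" "x2 \<noteq> x3"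
    and "k1 * x1 + k2 * x2 + k3 * x3 = 0"
    and "k1 * x1 ^ 2 + k2 * x2 ^ 2 + k3 * x3 ^ 2 = 0"
    and "k1 * x1 ^ 3 + k2 * x2 ^ 3 + k3 * x3 ^ 3 = 0"
  shows "k1 = 0" "k2 = 0" "k3 = 0"
proof -
  define S where "S j = k1 * x1 ^ j + k2 * x2 ^ j + k3 * x3 ^ j" for j :: nat
  have S: "S 1 = 0" "S 2 = 0" "S 3 = 0" using assms(7-9) unfolding S_def by simp_all
  have "k1 * x1 * (x1 - x2) * (x1 - x3) = S 3 - (x2 + x3) * S 2 + x2 * x3 * S 1"
    "k2 * x2 * (x2 - x1) * (x2 - x3) = S 3 - (x1 + x3) * S 2 + x1 * x3 * S 1"
    "k3 * x3 * (x3 - x1) * (x3 - x2) = S 3 - (x1 + x2) * S 2 + x1 * x2 * S 1"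
    unfolding S_def by (simp_all add: power2_eq_square power3_eq_cube algebra_simps)
  then show "k1 = 0" "k2 = 0" "k3 = 0" using S assms(1-6) by simp_all
qed

context exchanger_coeffs
begin

(* The characteristic polynomial of the exponential modes below: substituting them into the
   fluid equation leaves l * char_poly l * exp (l * y). *)
definition char_poly :: "real \<Rightarrow> real" where
  "char_poly l = a * c * l ^ 3 - b * c * l ^ 2 - h * (a + c) * l + b * h"

lemma char_poly_roots:
  obtains l1 l2 l3 where "char_poly l1 = 0" "char_poly l2 = 0" "char_poly l3 = 0"
    "l1 < 0" "0 < l2" "l2 < l3"
proof -
  have cont: "continuous_on S char_poly" for S
    unfolding char_poly_def by (intro continuous_intros)
  have p0: "0 < char_poly 0" unfolding char_poly_def using b_pos h_pos by simp
  have "char_poly (b / a) = - h * c * b / a"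
    unfolding char_poly_def using a_pos by (simp add: power2_eq_square power3_eq_cube field_simps)
  then have p1: "char_poly (b / a) < 0" using a_pos b_pos c_pos h_pos by simp
  have "\<forall>\<^sub>F x in at_top. 0 < char_poly x"
    unfolding char_poly_def using a_pos c_pos by real_asymp
  then obtain N where N: "\<And>x. N \<le> x \<Longrightarrow> 0 < char_poly x"
    unfolding eventually_at_top_linorder by blast
  have "\<forall>\<^sub>F x in at_bot. char_poly x < 0"
    unfolding char_poly_def using a_pos c_pos by real_asymp
  then obtain N' where N': "\<And>x. x \<le> N' \<Longrightarrow> char_poly x < 0"
    unfolding eventually_at_bot_linorder by blast
  define m where "m = min N' (-1)"
  have m: "m < 0" "char_poly m < 0" using N' unfolding m_def by simp_all
  obtain l1 where l1: "m \<le> l1" "l1 \<le> 0" "char_poly l1 = 0"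
    using IVT'[of char_poly m 0 0] m p0 cont by auto
  obtain l2 where l2: "0 \<le> l2" "l2 \<le> b / a" "char_poly l2 = 0"
    using IVT2'[of char_poly "b / a" 0 0] p0 p1 cont a_pos b_pos by auto
  define M where "M = max N (b / a)"
  have M: "b / a \<le> M" "0 < char_poly M" using N unfolding M_def by simp_all
  obtain l3 where l3: "b / a \<le> l3" "l3 \<le> M" "char_poly l3 = 0"
    using IVT'[of char_poly "b / a" 0 M] M p1 cont by auto
  have "l1 \<noteq> 0" "0 \<noteq> l2" "l2 \<noteq> b / a"
    using l1 l2 p0 p1 by auto
  then have "l1 < 0" "0 < l2" "l2 < b / a"
    using l1(2) l2(1,2) by (auto intro: order.not_eq_order_implies_strict)
  then show ?thesis using that l1(3) l2(3) l3 by (meson less_le_trans)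
qed

definition fluid_mode :: "real \<Rightarrow> real \<Rightarrow> real" where
  "fluid_mode l y = (h - c * l\<^sup>2) * exp (l * y)"

definition solid_mode :: "real \<Rightarrow> real \<Rightarrow> real" where
  "solid_mode l y = h * exp (l * y)"

lemma fluid_mode_deriv: "(fluid_mode l has_real_derivative l * fluid_mode l y) (at y)"
  unfolding fluid_mode_def by (auto intro!: derivative_eq_intros)

lemma solid_mode_deriv: "(solid_mode l has_real_derivative l * solid_mode l y) (at y)"
  unfolding solid_mode_def by (auto intro!: derivative_eq_intros)

lemma fluid_mode_ode:
  assumes "char_poly l = 0"
  shows "- a * (l\<^sup>2 * fluid_mode l y) + b * (l * fluid_mode l y)
    = h * (solid_mode l y - fluid_mode l y)"
proof -
  have "- a * (l\<^sup>2 * fluid_mode l y) + b * (l * fluid_mode l y) - h * (solid_mode l y - fluid_mode l y)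
      = l * char_poly l * exp (l * y)"
    unfolding fluid_mode_def solid_mode_def char_poly_def
    by (simp add: power2_eq_square power3_eq_cube algebra_simps)
  then show ?thesis using assms by simp
qed

lemma solid_mode_ode: "c * (l\<^sup>2 * solid_mode l y) = h * (solid_mode l y - fluid_mode l y)"
  unfolding fluid_mode_def solid_mode_def by (simp add: algebra_simps)

end

locale exchanger_modes = exchanger_coeffs +
  fixes l1 l2 l3 :: real
  assumes roots: "char_poly l1 = 0" "char_poly l2 = 0" "char_poly l3 = 0"
    and root_order: "l1 < 0" "0 < l2" "l2 < l3"
begin

definition fluid_profile :: "real \<times> real \<times> real \<times> real \<Rightarrow> real \<Rightarrow> real" where
  "fluid_profile k y = (case k of (k0, k1, k2, k3) \<Rightarrow>
     k0 + k1 * fluid_mode l1 y + k2 * fluid_mode l2 y + k3 * fluid_mode l3 y)"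

definition solid_profile :: "real \<times> real \<times> real \<times> real \<Rightarrow> real \<Rightarrow> real" where
  "solid_profile k y = (case k of (k0, k1, k2, k3) \<Rightarrow>
     k0 + k1 * solid_mode l1 y + k2 * solid_mode l2 y + k3 * solid_mode l3 y)"

definition deriv_coeffs :: "real \<times> real \<times> real \<times> real \<Rightarrow> real \<times> real \<times> real \<times> real" where
  "deriv_coeffs k = (case k of (k0, k1, k2, k3) \<Rightarrow> (0, l1 * k1, l2 * k2, l3 * k3))"

lemma fluid_profile_deriv:
  "(fluid_profile k has_real_derivative fluid_profile (deriv_coeffs k) y) (at y)"
proof -
  obtain k0 k1 k2 k3 where k: "k = (k0, k1, k2, k3)" using prod_cases4 by blast
  show ?thesis
    unfolding k fluid_profile_def deriv_coeffs_def
    by (auto intro!: derivative_eq_intros fluid_mode_deriv simp: algebra_simps)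
qed

lemma solid_profile_deriv:
  "(solid_profile k has_real_derivative solid_profile (deriv_coeffs k) y) (at y)"
proof -
  obtain k0 k1 k2 k3 where k: "k = (k0, k1, k2, k3)" using prod_cases4 by blast
  show ?thesis
    unfolding k solid_profile_def deriv_coeffs_def
    by (auto intro!: derivative_eq_intros solid_mode_deriv simp: algebra_simps)
qed

lemma continuous_on_profiles:
  "continuous_on S (fluid_profile k)" "continuous_on S (solid_profile k)"
  using fluid_profile_deriv[THEN DERIV_isCont] solid_profile_deriv[THEN DERIV_isCont]
  by (blast intro: continuous_at_imp_continuous_on)+

lemma fluid_profile_ode:
  "- a * fluid_profile (deriv_coeffs (deriv_coeffs k)) y + b * fluid_profile (deriv_coeffs k) y
     = h * (solid_profile k y - fluid_profile k y)"
proof -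
  obtain k0 k1 k2 k3 where k: "k = (k0, k1, k2, k3)" using prod_cases4 by blast
  have "- a * fluid_profile (deriv_coeffs (deriv_coeffs k)) y + b * fluid_profile (deriv_coeffs k) y
      = k1 * (- a * (l1\<^sup>2 * fluid_mode l1 y) + b * (l1 * fluid_mode l1 y))
      + k2 * (- a * (l2\<^sup>2 * fluid_mode l2 y) + b * (l2 * fluid_mode l2 y))
      + k3 * (- a * (l3\<^sup>2 * fluid_mode l3 y) + b * (l3 * fluid_mode l3 y))"
    unfolding k fluid_profile_def deriv_coeffs_def by (simp add: power2_eq_square algebra_simps)
  also have "\<dots> = k1 * (h * (solid_mode l1 y - fluid_mode l1 y))
      + k2 * (h * (solid_mode l2 y - fluid_mode l2 y)) + k3 * (h * (solid_mode l3 y - fluid_mode l3 y))"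
    using fluid_mode_ode roots by simp
  also have "\<dots> = h * (solid_profile k y - fluid_profile k y)"
    unfolding k solid_profile_def fluid_profile_def by (simp add: algebra_simps)
  finally show ?thesis .
qed

lemma solid_profile_ode:
  "c * solid_profile (deriv_coeffs (deriv_coeffs k)) y = h * (solid_profile k y - fluid_profile k y)"
proof -
  obtain k0 k1 k2 k3 where k: "k = (k0, k1, k2, k3)" using prod_cases4 by blast
  have "c * solid_profile (deriv_coeffs (deriv_coeffs k)) y
      = k1 * (c * (l1\<^sup>2 * solid_mode l1 y)) + k2 * (c * (l2\<^sup>2 * solid_mode l2 y))
      + k3 * (c * (l3\<^sup>2 * solid_mode l3 y))"
    unfolding k solid_profile_def deriv_coeffs_def by (simp add: power2_eq_square algebra_simps)
  also have "\<dots> = k1 * (h * (solid_mode l1 y - fluid_mode l1 y))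
      + k2 * (h * (solid_mode l2 y - fluid_mode l2 y)) + k3 * (h * (solid_mode l3 y - fluid_mode l3 y))"
    using solid_mode_ode by simp
  also have "\<dots> = h * (solid_profile k y - fluid_profile k y)"
    unfolding k solid_profile_def fluid_profile_def by (simp add: algebra_simps)
  finally show ?thesis .
qed

lemma reduced_solution_profiles:
  "reduced_solution a b c h L (\<lambda>y. solid_profile k y - fluid_profile k y)
     (fluid_profile (deriv_coeffs k)) (solid_profile (deriv_coeffs k))"
proof unfold_locales
  fix y
  show "((\<lambda>y. solid_profile k y - fluid_profile k y) has_real_derivative
      solid_profile (deriv_coeffs k) y - fluid_profile (deriv_coeffs k) y) (at y)"
    by (rule DERIV_diff[OF solid_profile_deriv fluid_profile_deriv])
  have "fluid_profile (deriv_coeffs (deriv_coeffs k)) y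
      = (b * fluid_profile (deriv_coeffs k) y - h * (solid_profile k y - fluid_profile k y)) / a"
    using fluid_profile_ode[of k y] a_pos by (simp add: field_simps)
  then show "(fluid_profile (deriv_coeffs k) has_real_derivative
      (b * fluid_profile (deriv_coeffs k) y - h * (solid_profile k y - fluid_profile k y)) / a) (at y)"
    using fluid_profile_deriv[of "deriv_coeffs k" y] by simp
  have "solid_profile (deriv_coeffs (deriv_coeffs k)) y = h * (solid_profile k y - fluid_profile k y) / c"
    using solid_profile_ode[of k y] c_pos by (simp add: field_simps)
  then show "(solid_profile (deriv_coeffs k) has_real_derivative
      h * (solid_profile k y - fluid_profile k y) / c) (at y)"
    using solid_profile_deriv[of "deriv_coeffs k" y] by simp
qed (intro continuous_intros continuous_on_profiles)+

definition boundary_map :: "real \<times> real \<times> real \<times> real \<Rightarrow> real \<times> real \<times> real \<times> real" where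
  "boundary_map k = (fluid_profile k 0, solid_profile k 0,
     c * solid_profile (deriv_coeffs k) L + b * (solid_profile k L - fluid_profile k L),
     b * fluid_profile (deriv_coeffs k) L - h * (solid_profile k L - fluid_profile k L))"

lemma linear_boundary_map: "linear boundary_map"
proof (rule linearI)
  fix k k' :: "real \<times> real \<times> real \<times> real" and r :: real
  obtain k0 k1 k2 k3 where k: "k = (k0, k1, k2, k3)" using prod_cases4 by blast
  obtain k0' k1' k2' k3' where k': "k' = (k0', k1', k2', k3')" using prod_cases4 by blast
  show "boundary_map (k + k') = boundary_map k + boundary_map k'"
    unfolding k k' boundary_map_def fluid_profile_def solid_profile_def deriv_coeffs_def
    by (simp add: algebra_simps)
  show "boundary_map (r *\<^sub>R k) = r *\<^sub>R boundary_map k"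
    unfolding k boundary_map_def fluid_profile_def solid_profile_def deriv_coeffs_def
    by (simp add: algebra_simps)
qed

lemma boundary_map_kernel:
  assumes "boundary_map k = 0"
  shows "k = 0"
proof -
  obtain k0 k1 k2 k3 where k: "k = (k0, k1, k2, k3)" using prod_cases4 by blast
  interpret S: reduced_solution a b c h L "\<lambda>y. solid_profile k y - fluid_profile k y"
    "fluid_profile (deriv_coeffs k)" "solid_profile (deriv_coeffs k)"
    by (rule reduced_solution_profiles)
  have bc: "fluid_profile k 0 = 0" "solid_profile k 0 = 0"
    "c * solid_profile (deriv_coeffs k) L + b * (solid_profile k L - fluid_profile k L) = 0"
    "b * fluid_profile (deriv_coeffs k) L = h * (solid_profile k L - fluid_profile k L)"
    using assms unfolding boundary_map_def by (simp_all add: zero_prod_def)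
  then have "solid_profile k 0 - fluid_profile k 0 = 0 \<and> fluid_profile (deriv_coeffs k) 0 = 0
      \<and> solid_profile (deriv_coeffs k) 0 = 0"
    using S.homogeneous_bvp_zero[of 0] L_pos by simp
  then have "c * (k1 * l1\<^sup>2 + k2 * l2\<^sup>2 + k3 * l3\<^sup>2) = 0"
    "h * (k1 * l1 + k2 * l2 + k3 * l3) - c * (k1 * l1 ^ 3 + k2 * l2 ^ 3 + k3 * l3 ^ 3) = 0"
    "h * (k1 * l1 + k2 * l2 + k3 * l3) = 0"
    unfolding k fluid_profile_def solid_profile_def deriv_coeffs_def fluid_mode_def solid_mode_def
    by (simp_all add: power2_eq_square power3_eq_cube algebra_simps)
  then have "k1 * l1 + k2 * l2 + k3 * l3 = 0" "k1 * l1\<^sup>2 + k2 * l2\<^sup>2 + k3 * l3\<^sup>2 = 0"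
    "k1 * l1 ^ 3 + k2 * l2 ^ 3 + k3 * l3 ^ 3 = 0"
    using c_pos h_pos by simp_all
  then have "k1 = 0" "k2 = 0" "k3 = 0"
    using vandermonde3_eq_zero[of l1 l2 l3 k1 k2 k3] root_order by auto
  moreover have "k0 = 0" using bc(1) calculation unfolding k fluid_profile_def by simp
  ultimately show ?thesis unfolding k by (simp add: zero_prod_def)
qed

lemma surj_boundary_map: "surj boundary_map"
  by (rule linear_inj_imp_surj[OF linear_boundary_map])
    (use boundary_map_kernel linear_injective_0[OF linear_boundary_map] in blast)

end

context exchanger_coeffs
begin

lemma classical_solution_exists:
  obtains Tf Tf' Ts Ts' Tf'' Ts'' where
    "\<And>y. (Tf has_real_derivative Tf' y) (at y)" "\<And>y. (Ts has_real_derivative Ts' y) (at y)"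
    "\<And>y. (Tf' has_real_derivative Tf'' y) (at y)" "\<And>y. (Ts' has_real_derivative Ts'' y) (at y)"
    "\<And>y. - a * Tf'' y + b * Tf' y = h * (Ts y - Tf y)" "\<And>y. c * Ts'' y = h * (Ts y - Tf y)"
    "Tf 0 = Tb" "Ts 0 = Tb" "c * Ts' L = q - b * (Ts L - Tf L)" "b * Tf' L = h * (Ts L - Tf L)"
proof -
  obtain l1 l2 l3 where "char_poly l1 = 0" "char_poly l2 = 0" "char_poly l3 = 0"
    "l1 < 0" "0 < l2" "l2 < l3"
    by (rule char_poly_roots)
  then interpret exchanger_modes a b c h L l1 l2 l3 by unfold_locales
  obtain k where "boundary_map k = (Tb, Tb, q, 0)" using surj_boundary_map by (metis surjD)
  then show ?thesis
    using that[of "fluid_profile k" "fluid_profile (deriv_coeffs k)" "solid_profile k"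
        "solid_profile (deriv_coeffs k)" "fluid_profile (deriv_coeffs (deriv_coeffs k))"
        "solid_profile (deriv_coeffs (deriv_coeffs k))"]
      fluid_profile_deriv solid_profile_deriv fluid_profile_ode solid_profile_ode
    unfolding boundary_map_def by (simp add: algebra_simps)
qed

end

section \<open>The boundary value problem\<close>

lemma bvp_solution_const: "bvp_solution L \<phi> \<kappa>f \<kappa>s hv cpf mc Ac Tb 0 (\<lambda>_. Tb) (\<lambda>_. Tb)"
  unfolding bvp_solution_def
  by (rule exI[of _ "\<lambda>_. 0"])+ (auto intro: derivative_eq_intros)

locale heat_exchanger =
  fixes L \<phi> \<kappa>f \<kappa>s hv cpf mc Ac :: real
  assumes L_pos: "0 < L" and \<phi>_pos: "0 < \<phi>" and \<phi>_less_1: "\<phi> < 1"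
    and \<kappa>f_pos: "0 < \<kappa>f" and \<kappa>s_pos: "0 < \<kappa>s" and hv_pos: "0 < hv"
    and cpf_pos: "0 < cpf" and mc_pos: "0 < mc" and Ac_pos: "0 < Ac"

sublocale heat_exchanger \<subseteq> exchanger_coeffs "\<phi> * \<kappa>f" "cpf * (mc / Ac)" "(1 - \<phi>) * \<kappa>s" hv L
  using L_pos \<phi>_pos \<phi>_less_1 \<kappa>f_pos \<kappa>s_pos hv_pos cpf_pos mc_pos Ac_pos by unfold_locales auto

context heat_exchanger
begin

lemma bvp_solution_reduced:
  assumes "bvp_solution L \<phi> \<kappa>f \<kappa>s hv cpf mc Ac Tb q Tf Ts"
  obtains Tf' Ts' where
    "reduced_solution (\<phi> * \<kappa>f) (cpf * (mc / Ac)) ((1 - \<phi>) * \<kappa>s) hv L (\<lambda>y. Ts y - Tf y) Tf' Ts'"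
    "\<And>y. y \<in> {0..L} \<Longrightarrow> (Tf has_real_derivative Tf' y) (at y within {0..L})"
    "\<And>y. y \<in> {0..L} \<Longrightarrow> (Ts has_real_derivative Ts' y) (at y within {0..L})"
    "Tf 0 = Tb" "Ts 0 = Tb"
    "cpf * (mc / Ac) * Tf' L = hv * (Ts L - Tf L)"
    "(1 - \<phi>) * \<kappa>s * Ts' L + cpf * (mc / Ac) * (Ts L - Tf L) = q"
proof -
  obtain Tf' Ts' Tf'' Ts'' where
    Tf': "\<forall>y\<in>{0..L}. (Tf has_real_derivative Tf' y) (at y within {0..L})" and
    Ts': "\<forall>y\<in>{0..L}. (Ts has_real_derivative Ts' y) (at y within {0..L})" and
    cont: "continuous_on {0..L} Tf'" "continuous_on {0..L} Ts'" and
    Tf'': "\<forall>y\<in>{0<..<L}. (Tf' has_real_derivative Tf'' y) (at y)" and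
    Ts'': "\<forall>y\<in>{0<..<L}. (Ts' has_real_derivative Ts'' y) (at y)" and
    ode_f: "\<forall>y\<in>{0<..<L}. - \<phi> * \<kappa>f * Tf'' y + cpf * (mc / Ac) * Tf' y = hv * (Ts y - Tf y)" and
    ode_s: "\<forall>y\<in>{0<..<L}. (1 - \<phi>) * \<kappa>s * Ts'' y = hv * (Ts y - Tf y)" and
    bc: "Tf 0 = Tb" "Ts 0 = Tb"
      "(1 - \<phi>) * \<kappa>s * Ts' L = q - cpf * (mc / Ac) * (Ts L - Tf L)"
      "Tf' L = (hv * Ac) / (cpf * mc) * (Ts L - Tf L)"
    using assms unfolding bvp_solution_def by blast
  have "reduced_solution (\<phi> * \<kappa>f) (cpf * (mc / Ac)) ((1 - \<phi>) * \<kappa>s) hv L (\<lambda>y. Ts y - Tf y) Tf' Ts'"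
  proof (rule reduced_solution_of_odes)
    show "continuous_on {0..L} Tf" "continuous_on {0..L} Ts"
      using DERIV_continuous_on[of "{0..L}" Tf Tf'] DERIV_continuous_on[of "{0..L}" Ts Ts'] Tf' Ts'
      by blast+
    show "(Tf has_real_derivative Tf' y) (at y)" "(Ts has_real_derivative Ts' y) (at y)"
      if "y \<in> {0<..<L}" for y
      using Tf'[rule_format, of y] Ts'[rule_format, of y] that by (simp_all add: at_within_Icc_at)
  qed (use cont Tf'' Ts'' ode_f ode_s in auto)
  moreover have "cpf * (mc / Ac) * Tf' L = hv * (Ts L - Tf L)"
    using bc(4) cpf_pos mc_pos Ac_pos by (simp add: field_simps)
  moreover have "(1 - \<phi>) * \<kappa>s * Ts' L + cpf * (mc / Ac) * (Ts L - Tf L) = q"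
    using bc(3) by simp
  ultimately show ?thesis
    using that Tf' Ts' bc(1,2) by blast
qed

lemma bvp_solution_exists: "\<exists>Tf Ts. bvp_solution L \<phi> \<kappa>f \<kappa>s hv cpf mc Ac Tb q Tf Ts"
proof -
  obtain Tf Tf' Ts Ts' Tf'' Ts'' where
    d: "\<And>y. (Tf has_real_derivative Tf' y) (at y)" "\<And>y. (Ts has_real_derivative Ts' y) (at y)"
      "\<And>y. (Tf' has_real_derivative Tf'' y) (at y)" "\<And>y. (Ts' has_real_derivative Ts'' y) (at y)"
    and ode: "\<And>y. - (\<phi> * \<kappa>f) * Tf'' y + cpf * (mc / Ac) * Tf' y = hv * (Ts y - Tf y)"
      "\<And>y. (1 - \<phi>) * \<kappa>s * Ts'' y = hv * (Ts y - Tf y)"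
    and bc: "Tf 0 = Tb" "Ts 0 = Tb" "(1 - \<phi>) * \<kappa>s * Ts' L = q - cpf * (mc / Ac) * (Ts L - Tf L)"
      "cpf * (mc / Ac) * Tf' L = hv * (Ts L - Tf L)"
    by (rule classical_solution_exists) blast
  have "Tf' L = (hv * Ac) / (cpf * mc) * (Ts L - Tf L)"
    using bc(4) cpf_pos mc_pos Ac_pos by (simp add: field_simps)
  moreover have "continuous_on {0..L} Tf'" "continuous_on {0..L} Ts'"
    using d(3,4)[THEN DERIV_isCont] by (blast intro: continuous_at_imp_continuous_on)+
  ultimately have "bvp_solution L \<phi> \<kappa>f \<kappa>s hv cpf mc Ac Tb q Tf Ts"
    unfolding bvp_solution_def using d ode bc
    by (intro exI[of _ Tf'] exI[of _ Ts'] exI[of _ Tf''] exI[of _ Ts''])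
      (auto intro: has_field_derivative_at_within)
  then show ?thesis by blast
qed

lemma bvp_solution_unique:
  assumes "bvp_solution L \<phi> \<kappa>f \<kappa>s hv cpf mc Ac Tb q Tf Ts"
    and "bvp_solution L \<phi> \<kappa>f \<kappa>s hv cpf mc Ac Tb q Tf2 Ts2"
    and "y \<in> {0..L}"
  shows "Tf y = Tf2 y \<and> Ts y = Ts2 y"
proof -
  obtain Tf' Ts' where S1: "reduced_solution (\<phi> * \<kappa>f) (cpf * (mc / Ac)) ((1 - \<phi>) * \<kappa>s) hv L
      (\<lambda>y. Ts y - Tf y) Tf' Ts'"
    and Tf': "\<And>y. y \<in> {0..L} \<Longrightarrow> (Tf has_real_derivative Tf' y) (at y within {0..L})"
    and "\<And>y. y \<in> {0..L} \<Longrightarrow> (Ts has_real_derivative Ts' y) (at y within {0..L})"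
    and bc1: "Tf 0 = Tb" "Ts 0 = Tb" "cpf * (mc / Ac) * Tf' L = hv * (Ts L - Tf L)"
      "(1 - \<phi>) * \<kappa>s * Ts' L + cpf * (mc / Ac) * (Ts L - Tf L) = q"
    by (rule bvp_solution_reduced[OF assms(1)]) blast
  obtain Tf2' Ts2' where S2: "reduced_solution (\<phi> * \<kappa>f) (cpf * (mc / Ac)) ((1 - \<phi>) * \<kappa>s) hv L
      (\<lambda>y. Ts2 y - Tf2 y) Tf2' Ts2'"
    and Tf2': "\<And>y. y \<in> {0..L} \<Longrightarrow> (Tf2 has_real_derivative Tf2' y) (at y within {0..L})"
    and "\<And>y. y \<in> {0..L} \<Longrightarrow> (Ts2 has_real_derivative Ts2' y) (at y within {0..L})"
    and bc2: "Tf2 0 = Tb" "Ts2 0 = Tb" "cpf * (mc / Ac) * Tf2' L = hv * (Ts2 L - Tf2 L)"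
      "(1 - \<phi>) * \<kappa>s * Ts2' L + cpf * (mc / Ac) * (Ts2 L - Tf2 L) = q"
    by (rule bvp_solution_reduced[OF assms(2)]) blast
  interpret S: reduced_solution "\<phi> * \<kappa>f" "cpf * (mc / Ac)" "(1 - \<phi>) * \<kappa>s" hv L
      "\<lambda>y. (Ts y - Tf y) - (Ts2 y - Tf2 y)" "\<lambda>y. Tf' y - Tf2' y" "\<lambda>y. Ts' y - Ts2' y"
    using reduced_solution.diff[OF S1 S2] .
  have "cpf * (mc / Ac) * (Tf' L - Tf2' L) = hv * ((Ts L - Tf L) - (Ts2 L - Tf2 L))"
    "(1 - \<phi>) * \<kappa>s * (Ts' L - Ts2' L) + cpf * (mc / Ac) * ((Ts L - Tf L) - (Ts2 L - Tf2 L)) = 0"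
    using bc1(3,4) bc2(3,4) unfolding ring_distribs by linarith+
  then have zero: "(Ts z - Tf z) - (Ts2 z - Tf2 z) = 0 \<and> Tf' z - Tf2' z = 0" if "z \<in> {0..L}" for z
    using S.homogeneous_bvp_zero[OF _ _ _ that] bc1(1,2) bc2(1,2) by simp
  have "((\<lambda>z. Tf z - Tf2 z) has_real_derivative 0) (at z within {0..L})" if "z \<in> {0..L}" for z
    using DERIV_diff[OF Tf' Tf2'] zero that by fastforce
  then obtain C where "\<forall>z\<in>{0..L}. Tf z - Tf2 z = C"
    using has_field_derivative_zero_constant[of "{0..L}"] by blast
  then have "Tf y - Tf2 y = Tf 0 - Tf2 0" using assms(3) L_pos by auto
  then show ?thesis using zero[OF assms(3)] bc1 bc2 by simp
qed

lemma bvp_solution_heated: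
  assumes "0 < q" and "bvp_solution L \<phi> \<kappa>f \<kappa>s hv cpf mc Ac Tb q Tf Ts"
  shows "\<forall>y\<in>{0<..L}. 0 < Ts y - Tf y"
    and "mono_on {0..L} Tf" "\<forall>y\<in>{0..L}. Tb \<le> Tf y"
    and "mono_on {0..L} Ts" "\<forall>y\<in>{0..L}. Tb \<le> Ts y"
proof -
  obtain Tf' Ts' where S: "reduced_solution (\<phi> * \<kappa>f) (cpf * (mc / Ac)) ((1 - \<phi>) * \<kappa>s) hv L
      (\<lambda>y. Ts y - Tf y) Tf' Ts'"
    and Tf': "\<And>y. y \<in> {0..L} \<Longrightarrow> (Tf has_real_derivative Tf' y) (at y within {0..L})"
    and Ts': "\<And>y. y \<in> {0..L} \<Longrightarrow> (Ts has_real_derivative Ts' y) (at y within {0..L})"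
    and bc: "Tf 0 = Tb" "Ts 0 = Tb" "cpf * (mc / Ac) * Tf' L = hv * (Ts L - Tf L)"
      "(1 - \<phi>) * \<kappa>s * Ts' L + cpf * (mc / Ac) * (Ts L - Tf L) = q"
    by (rule bvp_solution_reduced[OF assms(2)]) blast
  have "Ts 0 - Tf 0 = 0" "0 < (1 - \<phi>) * \<kappa>s * Ts' L + cpf * (mc / Ac) * (Ts L - Tf L)"
    using bc assms(1) by simp_all
  note pos = reduced_solution.heated_bvp_pos[OF S this(1) bc(3) this(2)]
  show "\<forall>y\<in>{0<..L}. 0 < Ts y - Tf y" using pos(3) assms(1) by simp
  show mono_f: "mono_on {0..L} Tf"
    by (rule mono_on_if_deriv_nonneg[OF Tf']) (use pos(1) assms(1) in \<open>auto intro: less_imp_le\<close>)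
  show mono_s: "mono_on {0..L} Ts"
    by (rule mono_on_if_deriv_nonneg[OF Ts']) (use pos(2) assms(1) in \<open>auto intro: less_imp_le\<close>)
  show "\<forall>y\<in>{0..L}. Tb \<le> Tf y"
    using mono_onD[OF mono_f, of 0] bc(1) L_pos by auto
  show "\<forall>y\<in>{0..L}. Tb \<le> Ts y"
    using mono_onD[OF mono_s, of 0] bc(2) L_pos by auto
qed

end

theorem proposition2:
  fixes L \<phi> \<kappa>f \<kappa>s hv cpf mc Ac Tb qHG :: real
  assumes "0 < L" and "0 < \<phi>" and "\<phi> < 1"
    and "0 < \<kappa>f" and "0 < \<kappa>s" and "0 < hv" and "0 < cpf" and "0 < mc" and "0 < Ac"
  shows "(\<exists>Tf Ts. bvp_solution L \<phi> \<kappa>f \<kappa>s hv cpf mc Ac Tb qHG Tf Ts) \<and>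
         (\<forall>Tf Ts Tf2 Ts2. bvp_solution L \<phi> \<kappa>f \<kappa>s hv cpf mc Ac Tb qHG Tf Ts \<and>
              bvp_solution L \<phi> \<kappa>f \<kappa>s hv cpf mc Ac Tb qHG Tf2 Ts2 \<longrightarrow>
              (\<forall>y\<in>{0..L}. Tf y = Tf2 y \<and> Ts y = Ts2 y)) \<and>
         (0 < qHG \<longrightarrow> (\<forall>Tf Ts. bvp_solution L \<phi> \<kappa>f \<kappa>s hv cpf mc Ac Tb qHG Tf Ts \<longrightarrow>
              (\<forall>y\<in>{0<..L}. Ts y - Tf y > 0) \<and>
              mono_on {0..L} Tf \<and> (\<forall>y\<in>{0..L}. Tf y \<ge> Tb) \<and>
              mono_on {0..L} Ts \<and> (\<forall>y\<in>{0..L}. Ts y \<ge> Tb))) \<and>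
         (qHG = 0 \<longrightarrow> (\<forall>Tf Ts. bvp_solution L \<phi> \<kappa>f \<kappa>s hv cpf mc Ac Tb qHG Tf Ts \<longrightarrow>
              (\<forall>y\<in>{0..L}. Tf y = Tb \<and> Ts y = Tb)))"
proof -
  interpret heat_exchanger L \<phi> \<kappa>f \<kappa>s hv cpf mc Ac
    by unfold_locales (fact assms)+
  have unheated: "\<forall>y\<in>{0..L}. Tf y = Tb \<and> Ts y = Tb"
    if "qHG = 0" "bvp_solution L \<phi> \<kappa>f \<kappa>s hv cpf mc Ac Tb qHG Tf Ts" for Tf Ts
    using bvp_solution_unique[OF _ bvp_solution_const, where Tf = Tf and Ts = Ts] that by auto
  show ?thesis
  proof (intro conjI allI impI)
    fix Tf Ts Tf2 Ts2
    assume "bvp_solution L \<phi> \<kappa>f \<kappa>s hv cpf mc Ac Tb qHG Tf Ts \<and>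
      bvp_solution L \<phi> \<kappa>f \<kappa>s hv cpf mc Ac Tb qHG Tf2 Ts2"
    then show "\<forall>y\<in>{0..L}. Tf y = Tf2 y \<and> Ts y = Ts2 y" using bvp_solution_unique by blast
  qed (use bvp_solution_exists bvp_solution_heated unheated in \<open>simp_all\<close>)
qed

end
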